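(* Let $\Delta$ be the finite-difference Laplacian on $\mathbb{Z}$, $\Delta f(n)=f(n+1)+f(n-1)-2f(n)$. There is $\delta>0$ such that for every $t\ge0$ one can choose complex numbers $(a_j)_{j\in\mathbb{Z}}$ with $|a_j|\le1$ so that, with $\psi_0=\sum_{j}a_j\delta_j$ and $\psi(t,n)=(e^{it\Delta}\psi_0)(n)$, $$|\psi(t,0)|\ge\delta\,t^{1/2}.$$
   Context: $\delta_j$ denotes the Kronecker delta function on $\mathbb{Z}$ supported at $j$; $e^{it\Delta}$ is the (bounded, unitary on $\ell^2$) linear Schrödinger evolution on $\mathbb{Z}$, applied to bounded sequences via its kernel. *)

theory Defs
  imports "HOL-Analysis.Analysis"
begin

definition dlap :: "(int \<Rightarrow> complex) \<Rightarrow> (int \<Rightarrow> complex)" where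
  "dlap f = (\<lambda>n. f (n + 1) + f (n - 1) - 2 * f n)"

text \<open>Since the
  discrete Laplacian is a bounded operator (norm at most 4) on bounded sequences,
  the exponential series converges pointwise; on bounded sequences this coincides
  with the action of the kernel of the unitary group on square-summable sequences.\<close>
definition schr_evol :: "real \<Rightarrow> (int \<Rightarrow> complex) \<Rightarrow> (int \<Rightarrow> complex)" where
  "schr_evol t f = (\<lambda>n. \<Sum>k. (\<i> * complex_of_real t) ^ k / of_nat (fact k) * (((dlap ^^ k) f) n))"

end

theory Submission
  imports Defs
begin

text \<open>
  Testing against a_j = cnj (sgn (u(t, -j))) on a window {-N..N} turns psi(t, 0) into the
  l^1 mass of the kernel u(t) = e^(it Delta) delta_0 over that window, so it suffices to show
  that this mass is at least a constant times sqrt t. The kernel is l^2-normalised (unitarity)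
  and satisfies the Bessel recurrence j u_j = i t (u_(j-1) - u_(j+1)). For t < 2, Chebyshev's
  inequality with the second moment and |u_j| <= 1 already give l^1 mass >= 1/2 in {-4..4}. For
  t >= 2, the second and fourth moments put l^2 mass >= 1/4 into the bulk |j| <= 63 t / 32. There
  the energy E_j = |u_j|^2 + |u_(j+1)|^2 + (j / t) Im (u_j cnj u_(j+1)) is comparable to
  |u_j|^2 + |u_(j+1)|^2, while its total variation over all of Z is at most 1/t; averaging over
  the bulk yields |u_j|^2 <= 320 / t there, and the l^1 mass is at least the l^2 mass divided by
  the maximum, i.e. at least sqrt t / 72.
\<close>

lemma summable_on_int_bounded_support:
  fixes f :: "int \<Rightarrow> 'a::topological_comm_monoid_add"
  assumes "\<And>n. N < \<bar>n\<bar> \<Longrightarrow> f n = 0"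
  shows "f summable_on UNIV"
proof (rule finite_nonzero_values_imp_summable_on)
  have "{n \<in> UNIV. f n \<noteq> 0} \<subseteq> {-N..N}"
    using assms by force
  then show "finite {n \<in> UNIV. f n \<noteq> 0}"
    using finite_subset by blast
qed

lemma summable_on_int_shift:
  "(\<lambda>n. f (n + s)) summable_on UNIV \<longleftrightarrow> f summable_on (UNIV :: int set)"
  by (rule summable_on_reindex_bij_witness[of _ "\<lambda>n. n - s" "\<lambda>n. n + s"]) auto

lemma has_sum_int_shift:
  "((\<lambda>n. f (n + s)) has_sum S) UNIV \<longleftrightarrow> (f has_sum S) (UNIV :: int set)"
  by (rule has_sum_reindex_bij_witness[of _ "\<lambda>n. n - s" "\<lambda>n. n + s"]) auto

lemma infsum_int_shift: "(\<Sum>\<^sub>\<infinity>n. f (n + s)) = (\<Sum>\<^sub>\<infinity>n::int. f n)"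
  by (rule infsum_reindex_bij_witness[of _ "\<lambda>n. n - s" "\<lambda>n. n + s"]) auto

lemma has_sum_sum:
  fixes f :: "'i \<Rightarrow> 'a \<Rightarrow> 'b::topological_comm_monoid_add"
  assumes "finite I" "\<And>i. i \<in> I \<Longrightarrow> (f i has_sum s i) A"
  shows "((\<lambda>x. \<Sum>i\<in>I. f i x) has_sum (\<Sum>i\<in>I. s i)) A"
  using assms by (induction I rule: finite_induct) (auto intro: has_sum_add)

lemma has_sum_if_in_finite:
  fixes f :: "'a \<Rightarrow> 'b::topological_comm_monoid_add"
  assumes "finite F"
  shows "((\<lambda>x. if x \<in> F then f x else 0) has_sum sum f F) UNIV"
  by (rule has_sum_finite_neutralI[of F]) (use assms in auto)

lemma abs_summable_on_product_mult:
  fixes f :: "'a \<Rightarrow> 'c::{real_normed_div_algebra, banach}" and g :: "'b \<Rightarrow> 'c"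
  assumes "(\<lambda>x. norm (f x)) summable_on A" "(\<lambda>y. norm (g y)) summable_on B"
  shows "(\<lambda>(x, y). norm (f x * g y)) summable_on A \<times> B"
proof -
  have "(\<lambda>x. norm (f x) * (\<Sum>\<^sub>\<infinity>y\<in>B. norm (g y))) summable_on A"
    using assms(1) by (rule summable_on_cmult_left)
  then have "(\<lambda>p. norm ((\<lambda>(x, y). f x * g y) p)) summable_on Sigma A (\<lambda>_. B)"
    using summable_on_cmult_right[OF assms(2)]
    by (subst Infinite_Sum.abs_summable_on_Sigma_iff) (simp add: norm_mult infsum_cmult_right' infsum_nonneg)
  then show ?thesis
    by (simp add: case_prod_unfold)
qed

lemma has_sum_product_mult:
  fixes f :: "'a \<Rightarrow> 'c::{real_normed_field, banach}" and g :: "'b \<Rightarrow> 'c"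
  assumes "(\<lambda>x. norm (f x)) summable_on A" "(\<lambda>y. norm (g y)) summable_on B"
  shows "((\<lambda>(x, y). f x * g y) has_sum (\<Sum>\<^sub>\<infinity>x\<in>A. f x) * (\<Sum>\<^sub>\<infinity>y\<in>B. g y)) (A \<times> B)"
proof -
  have summable: "(\<lambda>(x, y). f x * g y) summable_on A \<times> B"
    using abs_summable_on_product_mult[OF assms] abs_summable_summable by (simp add: case_prod_unfold)
  have "(\<Sum>\<^sub>\<infinity>(x, y)\<in>A \<times> B. f x * g y) = (\<Sum>\<^sub>\<infinity>x\<in>A. \<Sum>\<^sub>\<infinity>y\<in>B. f x * g y)"
    using infsum_Sigma'_banach[of "\<lambda>x y. f x * g y" A "\<lambda>_. B"] summable by simp
  also have "\<dots> = (\<Sum>\<^sub>\<infinity>x\<in>A. f x) * (\<Sum>\<^sub>\<infinity>y\<in>B. g y)"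
    by (simp add: infsum_cmult_right' infsum_cmult_left')
  finally show ?thesis
    using summable by (metis has_sum_infsum)
qed

lemma infsum_nat_prod_diagonal:
  fixes H :: "nat \<times> nat \<Rightarrow> 'a::banach"
  assumes "H summable_on UNIV"
  shows "(\<Sum>\<^sub>\<infinity>x. H x) = (\<Sum>\<^sub>\<infinity>n. \<Sum>k\<le>n. H (k, n - k))"
proof -
  let ?D = "Sigma (UNIV :: nat set) (\<lambda>n. {..n})"
  have "(\<lambda>(n, k). H (k, n - k)) summable_on ?D \<longleftrightarrow> H summable_on UNIV"
    by (rule summable_on_reindex_bij_witness[of _ "\<lambda>(k, l). (k + l, k)" "\<lambda>(n, k). (k, n - k)"]) auto
  then have "(\<Sum>\<^sub>\<infinity>n. \<Sum>\<^sub>\<infinity>k\<in>{..n}. H (k, n - k)) = (\<Sum>\<^sub>\<infinity>(n, k)\<in>?D. H (k, n - k))"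
    using infsum_Sigma'_banach[of "\<lambda>n k. H (k, n - k)" UNIV "\<lambda>n. {..n}"] assms by simp
  also have "\<dots> = (\<Sum>\<^sub>\<infinity>x. H x)"
    by (rule infsum_reindex_bij_witness[of _ "\<lambda>(k, l). (k + l, k)" "\<lambda>(n, k). (k, n - k)"]) auto
  finally show ?thesis
    by simp
qed

lemma has_sum_norm_sum_shifts_sq:
  fixes v :: "int \<Rightarrow> complex"
  assumes orthonormal: "\<And>p q. ((\<lambda>j. v (j + p) * cnj (v (j + q))) has_sum (if p = q then 1 else 0)) UNIV"
    and "finite M"
  shows "((\<lambda>j. (norm (\<Sum>p\<in>M. c p * v (j + p)))\<^sup>2) has_sum (\<Sum>p\<in>M. (norm (c p))\<^sup>2)) UNIV"
proof -
  have expand: "(\<Sum>p\<in>M. c p * v (j + p)) * cnj (\<Sum>q\<in>M. c q * v (j + q))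
      = (\<Sum>p\<in>M. \<Sum>q\<in>M. c p * cnj (c q) * (v (j + p) * cnj (v (j + q))))" for j
    unfolding cnj_sum sum_product complex_cnj_mult by (intro sum.cong refl) (simp add: mult_ac)
  have "((\<lambda>j. \<Sum>p\<in>M. \<Sum>q\<in>M. c p * cnj (c q) * (v (j + p) * cnj (v (j + q))))
      has_sum (\<Sum>p\<in>M. \<Sum>q\<in>M. c p * cnj (c q) * (if p = q then 1 else 0))) UNIV"
    by (intro has_sum_sum \<open>finite M\<close> has_sum_cmult_right orthonormal)
  then have "((\<lambda>j. (\<Sum>p\<in>M. c p * v (j + p)) * cnj (\<Sum>q\<in>M. c q * v (j + q)))
      has_sum (\<Sum>p\<in>M. c p * cnj (c p))) UNIV"
    unfolding expand using \<open>finite M\<close> by (simp add: if_distrib cong: if_cong)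
  then have "((\<lambda>j. Re ((\<Sum>p\<in>M. c p * v (j + p)) * cnj (\<Sum>q\<in>M. c q * v (j + q))))
      has_sum Re (\<Sum>p\<in>M. c p * cnj (c p))) UNIV"
    by (rule has_sum_Re)
  moreover have "Re (z * cnj z) = (norm z)\<^sup>2" for z
    by (simp only: complex_norm_square[symmetric] Re_complex_of_real)
  ultimately show ?thesis
    by (simp only: Re_sum)
qed

lemma sum_int_telescope:
  fixes f :: "int \<Rightarrow> 'a::ab_group_add"
  assumes "j \<le> k"
  shows "(\<Sum>i\<in>{j..<k}. f (i + 1) - f i) = f k - f j"
  using assms
proof (induction k rule: int_ge_induct)
  case (step k)
  have "{j..<k + 1} = insert k {j..<k}"
    using step.hyps by auto
  with step show ?case
    by simp
qed simp

lemma sum_sq_le_bound_mult_sum: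
  fixes x :: "'a \<Rightarrow> real"
  assumes "\<And>j. j \<in> F \<Longrightarrow> 0 \<le> x j" "\<And>j. j \<in> F \<Longrightarrow> x j \<le> M"
  shows "(\<Sum>j\<in>F. (x j)\<^sup>2) \<le> M * (\<Sum>j\<in>F. x j)"
  unfolding sum_distrib_left power2_eq_square by (intro sum_mono mult_right_mono) (simp_all add: assms)

lemma cnj_sgn_mult_self: "cnj (sgn z) * z = of_real (norm z)"
proof (cases "z = 0")
  case False
  have "cnj (sgn z) * z = cnj z * z / of_real (norm z)"
    by (simp add: sgn_div_norm divide_inverse mult_ac scaleR_conv_of_real)
  also have "\<dots> = (of_real (norm z))\<^sup>2 / of_real (norm z)"
    using complex_norm_square[of z] by (simp add: mult.commute)
  finally show ?thesis
    using False by (simp add: power2_eq_square)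
qed simp

lemma abs_Im_mult_cnj_le: "\<bar>Im (x * cnj y)\<bar> \<le> ((norm x)\<^sup>2 + (norm y)\<^sup>2) / 2"
proof -
  have "\<bar>Im (x * cnj y)\<bar> \<le> norm x * norm y"
    using abs_Im_le_cmod[of "x * cnj y"] by (simp add: norm_mult)
  also have "\<dots> \<le> ((norm x)\<^sup>2 + (norm y)\<^sup>2) / 2"
    using zero_le_power2[of "norm x - norm y"] by (simp add: power2_eq_square algebra_simps)
  finally show ?thesis .
qed

lemma summable_on_dlap:
  assumes "f summable_on UNIV"
  shows "dlap f summable_on UNIV"
proof -
  have "(\<lambda>n. f (n + s)) summable_on UNIV" for s
    using assms summable_on_int_shift by blast
  from this[of 1] this[of "-1"] have "(\<lambda>n. f (n + 1) + f (n + -1) + (-2) * f n) summable_on UNIV"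
    by (intro summable_on_add summable_on_cmult_right assms)
  moreover have "dlap f = (\<lambda>n. f (n + 1) + f (n + -1) + (-2) * f n)"
    by (simp add: dlap_def fun_eq_iff)
  ultimately show ?thesis
    by simp
qed

lemma infsum_norm_dlap_le:
  assumes "f summable_on UNIV"
  shows "(\<Sum>\<^sub>\<infinity>n. norm (dlap f n)) \<le> 4 * (\<Sum>\<^sub>\<infinity>n. norm (f n))"
proof -
  have norm_f: "(\<lambda>n. norm (f n)) summable_on UNIV"
    using assms summable_on_iff_abs_summable_on_complex by blast
  have norm_shift: "(\<lambda>n. norm (f (n + s))) summable_on UNIV" for s
    using norm_f summable_on_int_shift[of "\<lambda>n. norm (f n)"] by blast
  have "(\<Sum>\<^sub>\<infinity>n. norm (dlap f n))
      \<le> (\<Sum>\<^sub>\<infinity>n. norm (f (n + 1)) + norm (f (n + -1)) + 2 * norm (f n))"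
  proof (rule infsum_mono)
    show "(\<lambda>n. norm (dlap f n)) summable_on UNIV"
      using summable_on_dlap[OF assms] summable_on_iff_abs_summable_on_complex by blast
    show "(\<lambda>n. norm (f (n + 1)) + norm (f (n + -1)) + 2 * norm (f n)) summable_on UNIV"
      by (intro summable_on_add summable_on_cmult_right norm_shift norm_f)
    fix n
    have "norm (dlap f n) \<le> norm (f (n + 1) + f (n - 1)) + norm (2 * f n)"
      unfolding dlap_def by (rule norm_triangle_ineq4)
    also have "\<dots> \<le> norm (f (n + 1)) + norm (f (n - 1)) + 2 * norm (f n)"
      by (simp add: norm_mult norm_triangle_ineq)
    finally show "norm (dlap f n) \<le> norm (f (n + 1)) + norm (f (n + -1)) + 2 * norm (f n)"
      by simp
  qed
  also have "\<dots> = (\<Sum>\<^sub>\<infinity>n. norm (f (n + 1))) + (\<Sum>\<^sub>\<infinity>n. norm (f (n + -1))) + 2 * (\<Sum>\<^sub>\<infinity>n. norm (f n))"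
    by (simp only: infsum_add infsum_cmult_right summable_on_add summable_on_cmult_right norm_shift norm_f)
  also have "\<dots> = 4 * (\<Sum>\<^sub>\<infinity>n. norm (f n))"
    using infsum_int_shift[of "\<lambda>n. norm (f n)" 1] infsum_int_shift[of "\<lambda>n. norm (f n)" "-1"] by simp
  finally show ?thesis .
qed

lemma infsum_dlap_mult:
  assumes "\<And>n. N < \<bar>n\<bar> \<Longrightarrow> g n = 0"
  shows "(\<Sum>\<^sub>\<infinity>n. dlap f n * g n) = (\<Sum>\<^sub>\<infinity>n. f n * dlap g n)"
proof -
  have summable: "(\<lambda>n. f (n + r) * g (n + s)) summable_on UNIV"
    and summable': "(\<lambda>n. g (n + s) * f (n + r)) summable_on UNIV" for r s
    by (rule summable_on_int_bounded_support[of "N + \<bar>s\<bar>"]; simp add: assms)+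
  \<comment> \<open>all shifts are written as n + s, so that one summability fact covers every term\<close>
  have expand: "(\<Sum>\<^sub>\<infinity>n. F (n + 1) * G (n + 0) + F (n + -1) * G (n + 0) + (-2) * (F (n + 0) * G (n + 0)))
      = (\<Sum>\<^sub>\<infinity>n. F (n + 1) * G (n + 0)) + (\<Sum>\<^sub>\<infinity>n. F (n + -1) * G (n + 0))
        + (-2) * (\<Sum>\<^sub>\<infinity>n. F (n + 0) * G (n + 0))"
    if "\<And>r s. (\<lambda>n. F (n + r) * G (n + s)) summable_on UNIV" for F G :: "int \<Rightarrow> complex"
    by (simp only: infsum_add infsum_cmult_right summable_on_add summable_on_cmult_right that)
  have "(\<Sum>\<^sub>\<infinity>n. dlap f n * g n)
      = (\<Sum>\<^sub>\<infinity>n. f (n + 1) * g (n + 0)) + (\<Sum>\<^sub>\<infinity>n. f (n + -1) * g (n + 0))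
        + (-2) * (\<Sum>\<^sub>\<infinity>n. f (n + 0) * g (n + 0))"
    using expand[where F = f and G = g, OF summable] by (simp add: dlap_def algebra_simps)
  also have "\<dots> = (\<Sum>\<^sub>\<infinity>n. f (n + 0) * g (n + -1)) + (\<Sum>\<^sub>\<infinity>n. f (n + 0) * g (n + 1))
        + (-2) * (\<Sum>\<^sub>\<infinity>n. f (n + 0) * g (n + 0))"
    using infsum_int_shift[of "\<lambda>n. f (n + 0) * g (n + -1)" 1]
      infsum_int_shift[of "\<lambda>n. f (n + 0) * g (n + 1)" "-1"] by simp
  also have "\<dots> = (\<Sum>\<^sub>\<infinity>n. f n * dlap g n)"
    using expand[where F = g and G = f, OF summable'] by (simp add: dlap_def algebra_simps)
  finally show ?thesis .
qed

lemma of_int_mult_dlap: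
  "of_int n * dlap g n = dlap (\<lambda>m. of_int m * g m) n + g (n - 1) - g (n + 1)"
  by (simp add: dlap_def algebra_simps)

lemma dlap_central_difference: "dlap (\<lambda>m. c * (F (m - 1) - F (m + 1))) n = c * (dlap F (n - 1) - dlap F (n + 1))"
  by (simp add: dlap_def algebra_simps)

lemma dlap_pow_Suc_apply:
  "(dlap ^^ Suc k) f n = (dlap ^^ k) f (n + 1) + (dlap ^^ k) f (n - 1) - 2 * (dlap ^^ k) f n"
  by (simp add: dlap_def)

lemma dlap_pow_sum_translates:
  "(dlap ^^ k) (\<lambda>n. \<Sum>j\<in>F. b j * f (n - j)) = (\<lambda>n. \<Sum>j\<in>F. b j * (dlap ^^ k) f (n - j))"
proof (induction k)
  case 0
  show ?case
    by simp
next
  case (Suc k)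
  have "(dlap ^^ Suc k) (\<lambda>n. \<Sum>j\<in>F. b j * f (n - j)) n = (\<Sum>j\<in>F. b j * (dlap ^^ Suc k) f (n - j))" for n
  proof -
    have indices: "n + 1 - j = n - j + 1" "n - 1 - j = n - j - 1" for j
      by simp_all
    have "(dlap ^^ Suc k) (\<lambda>n. \<Sum>j\<in>F. b j * f (n - j)) n
        = (\<Sum>j\<in>F. b j * (dlap ^^ k) f (n + 1 - j)) + (\<Sum>j\<in>F. b j * (dlap ^^ k) f (n - 1 - j))
          - 2 * (\<Sum>j\<in>F. b j * (dlap ^^ k) f (n - j))"
      by (simp only: dlap_pow_Suc_apply Suc)
    also have "\<dots> = (\<Sum>j\<in>F. b j * ((dlap ^^ k) f (n - j + 1) + (dlap ^^ k) f (n - j - 1)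
        - 2 * (dlap ^^ k) f (n - j)))"
      unfolding indices by (simp add: sum.distrib sum_subtractf sum_distrib_left algebra_simps)
    finally show ?thesis
      by (simp only: dlap_pow_Suc_apply)
  qed
  then show ?case
    by blast
qed

definition delta0 :: "int \<Rightarrow> complex" where
  "delta0 n = (if n = 0 then 1 else 0)"

definition lap_delta :: "nat \<Rightarrow> int \<Rightarrow> complex" where
  "lap_delta k = (dlap ^^ k) delta0"

lemma lap_delta_0 [simp]: "lap_delta 0 = delta0"
  by (simp add: lap_delta_def)

lemma lap_delta_Suc_eq_dlap: "lap_delta (Suc k) = dlap (lap_delta k)"
  by (simp add: lap_delta_def)

lemma lap_delta_Suc:
  "lap_delta (Suc k) n = lap_delta k (n + 1) + lap_delta k (n - 1) - 2 * lap_delta k n"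
  by (simp add: lap_delta_Suc_eq_dlap dlap_def)

lemma lap_delta_eq_0: "int k < \<bar>n\<bar> \<Longrightarrow> lap_delta k n = 0"
  by (induction k arbitrary: n) (simp_all add: delta0_def lap_delta_Suc)

lemma cnj_lap_delta [simp]: "cnj (lap_delta k n) = lap_delta k n"
  by (induction k arbitrary: n) (simp_all add: delta0_def lap_delta_Suc)

lemma summable_on_lap_delta: "lap_delta k summable_on UNIV"
  using lap_delta_eq_0 by (rule summable_on_int_bounded_support)

lemma infsum_norm_lap_delta_le: "(\<Sum>\<^sub>\<infinity>n. norm (lap_delta k n)) \<le> 4 ^ k"
proof (induction k)
  case 0
  have "(\<Sum>\<^sub>\<infinity>n. norm (delta0 n)) = 1"
    by (rule infsumI, rule has_sum_finite_neutralI[of "{0}"]) (auto simp: delta0_def)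
  then show ?case by simp
next
  case (Suc k)
  then show ?case
    using infsum_norm_dlap_le[OF summable_on_lap_delta[of k]] by (simp add: lap_delta_Suc_eq_dlap)
qed

lemma norm_lap_delta_le: "norm (lap_delta k n) \<le> 4 ^ k"
proof -
  have "(\<Sum>m\<in>{n}. norm (lap_delta k m)) \<le> (\<Sum>\<^sub>\<infinity>m. norm (lap_delta k m))"
    using summable_on_lap_delta summable_on_iff_abs_summable_on_complex
    by (intro finite_sum_le_infsum) auto
  then show ?thesis
    using infsum_norm_lap_delta_le[of k] by simp
qed

lemma infsum_lap_delta_mult_lap_delta:
  "(\<Sum>\<^sub>\<infinity>j. lap_delta k (j + m) * lap_delta l j) = lap_delta (k + l) m"
proof (induction l arbitrary: k)
  case 0
  show ?case
    by (simp, rule infsumI, rule has_sum_finite_neutralI[of "{0}"]) (auto simp: delta0_def)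
next
  case (Suc l)
  have shift: "dlap (\<lambda>j. lap_delta k (j + m)) = (\<lambda>j. lap_delta (Suc k) (j + m))"
    by (simp add: dlap_def lap_delta_Suc fun_eq_iff algebra_simps)
  have "(\<Sum>\<^sub>\<infinity>j. lap_delta k (j + m) * lap_delta (Suc l) j)
      = (\<Sum>\<^sub>\<infinity>j. lap_delta k (j + m) * dlap (lap_delta l) j)"
    by (simp add: lap_delta_Suc_eq_dlap)
  also have "\<dots> = (\<Sum>\<^sub>\<infinity>j. lap_delta (Suc k) (j + m) * lap_delta l j)"
    using infsum_dlap_mult[where g = "lap_delta l" and f = "\<lambda>j. lap_delta k (j + m)", OF lap_delta_eq_0]
    by (simp add: shift)
  also have "\<dots> = lap_delta (Suc k + l) m"
    by (rule Suc)
  finally show ?case by simp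
qed

lemma of_int_mult_lap_delta:
  "of_int n * lap_delta (Suc k) n = of_nat (Suc k) * (lap_delta k (n - 1) - lap_delta k (n + 1))"
proof (induction k arbitrary: n)
  case 0
  have "(\<lambda>m. of_int m * delta0 m) = (\<lambda>_. 0)"
    by (simp add: delta0_def fun_eq_iff)
  then show ?case
    using of_int_mult_dlap[of n delta0] by (simp add: lap_delta_Suc_eq_dlap dlap_def)
next
  case (Suc k)
  have "of_int n * lap_delta (Suc (Suc k)) n
      = dlap (\<lambda>m. of_int m * lap_delta (Suc k) m) n + lap_delta (Suc k) (n - 1) - lap_delta (Suc k) (n + 1)"
    by (simp only: lap_delta_Suc_eq_dlap[of "Suc k"] of_int_mult_dlap)
  also have "dlap (\<lambda>m. of_int m * lap_delta (Suc k) m) n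
      = of_nat (Suc k) * (lap_delta (Suc k) (n - 1) - lap_delta (Suc k) (n + 1))"
    by (simp only: Suc.IH dlap_central_difference) (simp only: lap_delta_Suc_eq_dlap)
  finally show ?case
    by (simp add: algebra_simps)
qed

section \<open>The Schroedinger kernel\<close>

definition schr_coeff :: "real \<Rightarrow> nat \<Rightarrow> complex" where
  "schr_coeff t k = (\<i> * complex_of_real t) ^ k / of_nat (fact k)"

definition schr_kernel :: "real \<Rightarrow> int \<Rightarrow> complex" where
  "schr_kernel t = schr_evol t delta0"

lemma schr_kernel_eq_suminf: "schr_kernel t j = (\<Sum>k. schr_coeff t k * lap_delta k j)"
  by (simp add: schr_kernel_def schr_evol_def schr_coeff_def lap_delta_def)

lemma norm_schr_coeff: "norm (schr_coeff t k) = \<bar>t\<bar> ^ k / fact k"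
  by (simp add: schr_coeff_def norm_mult norm_power norm_divide)

lemma schr_coeff_Suc: "of_nat (Suc k) * schr_coeff t (Suc k) = \<i> * of_real t * schr_coeff t k"
proof -
  have "of_nat (fact (Suc k)) = of_nat (Suc k) * (of_nat (fact k) :: complex)"
    by (simp only: fact_Suc of_nat_mult of_nat_id)
  then show ?thesis
    by (simp add: schr_coeff_def del: of_nat_Suc)
qed

lemma sum_schr_coeff_mult_cnj:
  "(\<Sum>k\<le>n. schr_coeff t k * cnj (schr_coeff t (n - k))) = (if n = 0 then 1 else 0)"
proof -
  define x where "x = \<i> * complex_of_real t"
  have "(\<Sum>k\<le>n. schr_coeff t k * cnj (schr_coeff t (n - k)))
      = (\<Sum>k\<le>n. x ^ k /\<^sub>R fact k * (- x) ^ (n - k) /\<^sub>R fact (n - k))"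
    by (intro sum.cong refl) (simp add: schr_coeff_def x_def scaleR_conv_of_real divide_inverse)
  also have "\<dots> = (x + - x) ^ n /\<^sub>R fact n"
    by (subst exp_series_add_commuting) (auto simp: algebra_simps)
  finally show ?thesis
    by simp
qed

lemma summable_norm_schr_coeff_mult: "summable (\<lambda>k. norm (schr_coeff t k) * 4 ^ k)"
proof -
  have "summable (\<lambda>k. (4 * \<bar>t\<bar>) ^ k /\<^sub>R fact k)"
    by (rule summable_exp_generic)
  then show ?thesis
    by (simp add: norm_schr_coeff power_mult_distrib divide_inverse mult_ac)
qed

lemma summable_norm_schr_kernel_series: "summable (\<lambda>k. norm (schr_coeff t k * lap_delta k j))"
  by (rule summable_comparison_test'[OF summable_norm_schr_coeff_mult[of t]])
     (simp add: norm_mult mult_left_mono[OF norm_lap_delta_le])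

lemma schr_kernel_sums: "(\<lambda>k. schr_coeff t k * lap_delta k j) sums schr_kernel t j"
  unfolding schr_kernel_eq_suminf
  by (rule summable_sums[OF summable_norm_cancel[OF summable_norm_schr_kernel_series]])

lemma schr_kernel_has_sum: "((\<lambda>k. schr_coeff t k * lap_delta k j) has_sum schr_kernel t j) UNIV"
  by (rule norm_summable_imp_has_sum[OF summable_norm_schr_kernel_series schr_kernel_sums])

definition kernel_product_series :: "real \<Rightarrow> int \<Rightarrow> (nat \<times> nat) \<times> int \<Rightarrow> complex" where
  "kernel_product_series t m = (\<lambda>((k, l), j).
     schr_coeff t k * lap_delta k (j + m) * (cnj (schr_coeff t l) * lap_delta l j))"

lemma abs_summable_on_kernel_product_series:
  "(\<lambda>x. norm (kernel_product_series t m x)) summable_on UNIV \<times> UNIV"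
proof -
  let ?T = "kernel_product_series t m" and ?a = "schr_coeff t"
  define G where "G = (\<lambda>k. norm (?a k) * 4 ^ k)"
  have G: "(\<lambda>k. norm (G k)) summable_on UNIV"
    using summable_norm_schr_coeff_mult by (auto simp: G_def intro: summable_nonneg_imp_summable_on)
  have bounded_support: "(\<lambda>j. norm (?T ((k, l), j))) summable_on UNIV" for k l
    by (rule summable_on_int_bounded_support[of "int l"]) (simp add: kernel_product_series_def lap_delta_eq_0)
  have dominated: "(\<Sum>\<^sub>\<infinity>j. norm (?T ((k, l), j))) \<le> G k * G l" for k l
  proof -
    have "(\<Sum>\<^sub>\<infinity>j. norm (?T ((k, l), j)))
        = (\<Sum>\<^sub>\<infinity>j. norm (?a k) * norm (?a l) * (norm (lap_delta k (j + m)) * norm (lap_delta l j)))"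
      by (simp add: kernel_product_series_def norm_mult mult_ac)
    also have "\<dots> = norm (?a k) * norm (?a l) * (\<Sum>\<^sub>\<infinity>j. norm (lap_delta k (j + m)) * norm (lap_delta l j))"
      by (rule infsum_cmult_right')
    also have "\<dots> \<le> norm (?a k) * norm (?a l) * (\<Sum>\<^sub>\<infinity>j. 4 ^ k * norm (lap_delta l j))"
      by (intro mult_left_mono infsum_mono summable_on_int_bounded_support[of "int l"])
         (simp_all add: lap_delta_eq_0 mult_right_mono norm_lap_delta_le)
    also have "\<dots> \<le> norm (?a k) * norm (?a l) * (4 ^ k * 4 ^ l)"
      by (intro mult_left_mono) (simp_all add: infsum_cmult_right' infsum_norm_lap_delta_le)
    finally show ?thesis
      by (simp add: G_def mult_ac)
  qed
  have "(\<lambda>x. norm ((\<lambda>(k, l). G k * G l) x)) summable_on UNIV"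
    using abs_summable_on_product_mult[OF G G] by (simp add: case_prod_unfold)
  then have "(\<lambda>x. norm (\<Sum>\<^sub>\<infinity>j. norm (?T (x, j)))) summable_on UNIV"
    by (rule Infinite_Sum.abs_summable_on_comparison_test)
       (use dominated in \<open>auto simp: infsum_nonneg G_def abs_mult\<close>)
  with bounded_support show ?thesis
    by (subst Infinite_Sum.abs_summable_on_Sigma_iff) auto
qed

text \<open>
  The triple series is summed in two orders: over j first, the
  convolution identity leaves the coefficients of exp (i t x) exp (- i t x) times
  lap_delta (k + l) m, of which only k = l = 0 survives after summing along the diagonals
  k + l = n; over (k, l) first, it factors into the two kernel series.
\<close>
lemma schr_kernel_inner_shift:
  "((\<lambda>j. schr_kernel t (j + m) * cnj (schr_kernel t j)) has_sum delta0 m) UNIV"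
proof -
  let ?T = "kernel_product_series t m" and ?a = "schr_coeff t"
  have "(?T has_sum (\<Sum>\<^sub>\<infinity>x. ?T x)) (UNIV \<times> UNIV)"
    using abs_summable_on_kernel_product_series by (simp add: abs_summable_summable)
  moreover have "((\<lambda>j. ?T ((k, l), j)) has_sum ?a k * cnj (?a l) * lap_delta (k + l) m) UNIV" for k l
  proof -
    have "(\<Sum>\<^sub>\<infinity>j. ?T ((k, l), j)) = (\<Sum>\<^sub>\<infinity>j. ?a k * cnj (?a l) * (lap_delta k (j + m) * lap_delta l j))"
      by (simp add: kernel_product_series_def mult_ac)
    also have "\<dots> = ?a k * cnj (?a l) * lap_delta (k + l) m"
      by (simp only: infsum_cmult_right' infsum_lap_delta_mult_lap_delta)
    moreover have "(\<lambda>j. ?T ((k, l), j)) summable_on UNIV"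
      by (rule summable_on_int_bounded_support[of "int l"]) (simp add: kernel_product_series_def lap_delta_eq_0)
    ultimately show ?thesis
      by (metis has_sum_infsum)
  qed
  ultimately have diagonal: "((\<lambda>(k, l). ?a k * cnj (?a l) * lap_delta (k + l) m) has_sum (\<Sum>\<^sub>\<infinity>x. ?T x)) UNIV"
    using has_sum_SigmaD[where f = ?T and A = UNIV and B = "\<lambda>_. UNIV"] by (auto simp: case_prod_unfold)
  have "(\<Sum>\<^sub>\<infinity>(k, l). ?a k * cnj (?a l) * lap_delta (k + l) m)
      = (\<Sum>\<^sub>\<infinity>n. (\<Sum>k\<le>n. ?a k * cnj (?a (n - k))) * lap_delta n m)"
    using diagonal by (subst infsum_nat_prod_diagonal) (auto simp: sum_distrib_right summable_on_def)
  also have "\<dots> = delta0 m"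
    by (simp add: sum_schr_coeff_mult_cnj, rule infsumI, rule has_sum_finite_neutralI[of "{0}"]) auto
  finally have "(\<Sum>\<^sub>\<infinity>x. ?T x) = delta0 m"
    using diagonal by (simp add: infsumI)
  with \<open>(?T has_sum _) _\<close> have "((\<lambda>(j, x). ?T (x, j)) has_sum delta0 m) (UNIV \<times> UNIV)"
    using has_sum_swap by metis
  moreover have "((\<lambda>x. ?T (x, j)) has_sum schr_kernel t (j + m) * cnj (schr_kernel t j)) UNIV" for j
  proof -
    have kernel: "((\<lambda>k. ?a k * lap_delta k i) has_sum schr_kernel t i) UNIV" for i
      by (rule schr_kernel_has_sum)
    have kernel_cnj: "((\<lambda>k. cnj (?a k) * lap_delta k i) has_sum cnj (schr_kernel t i)) UNIV" for i
    proof -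
      have "((\<lambda>k. cnj (?a k * lap_delta k i)) has_sum cnj (schr_kernel t i)) UNIV"
        using kernel[of i] by (simp only: has_sum_cnj_iff)
      then show ?thesis
        by (simp only: complex_cnj_mult cnj_lap_delta)
    qed
    have "(\<lambda>k. norm (?a k * lap_delta k i)) summable_on UNIV" for i
      using summable_norm_schr_kernel_series[of t i] by (auto intro: summable_nonneg_imp_summable_on)
    then have "((\<lambda>(k, l). ?a k * lap_delta k (j + m) * (cnj (?a l) * lap_delta l j)) has_sum
        (\<Sum>\<^sub>\<infinity>k. ?a k * lap_delta k (j + m)) * (\<Sum>\<^sub>\<infinity>l. cnj (?a l) * lap_delta l j)) UNIV"
      using has_sum_product_mult[where f = "\<lambda>k. ?a k * lap_delta k (j + m)" and A = UNIV
          and g = "\<lambda>l. cnj (?a l) * lap_delta l j" and B = UNIV]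
      by (simp add: norm_mult)
    then show ?thesis
      using infsumI[OF kernel] infsumI[OF kernel_cnj] by (simp add: kernel_product_series_def case_prod_unfold)
  qed
  ultimately show ?thesis
    using has_sum_SigmaD[where f = "\<lambda>(j, x). ?T (x, j)" and A = UNIV and B = "\<lambda>_. UNIV"]
    by (auto simp: case_prod_unfold)
qed

lemma schr_kernel_shifts_orthonormal:
  "((\<lambda>j. schr_kernel t (j + p) * cnj (schr_kernel t (j + q))) has_sum (if p = q then 1 else 0)) UNIV"
  using schr_kernel_inner_shift[of t "p - q"]
    has_sum_int_shift[of "\<lambda>j. schr_kernel t (j + (p - q)) * cnj (schr_kernel t j)" q]
  by (simp add: delta0_def algebra_simps)

lemma has_sum_norm_schr_kernel_sq: "((\<lambda>j. (norm (schr_kernel t j))\<^sup>2) has_sum 1) UNIV"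
  using has_sum_norm_sum_shifts_sq[OF schr_kernel_shifts_orthonormal, of "{0}" "\<lambda>_. 1"] by simp

lemma sum_norm_schr_kernel_sq_le: "finite F \<Longrightarrow> (\<Sum>j\<in>F. (norm (schr_kernel t j))\<^sup>2) \<le> 1"
  by (rule finite_sum_le_has_sum[OF has_sum_norm_schr_kernel_sq]) auto

lemma norm_schr_kernel_le_1: "norm (schr_kernel t j) \<le> 1"
  using sum_norm_schr_kernel_sq_le[of "{j}" t] by (simp add: power_le_one_iff)

lemma schr_kernel_recurrence:
  "of_int j * schr_kernel t j = \<i> * of_real t * (schr_kernel t (j - 1) - schr_kernel t (j + 1))"
proof -
  define f where "f k = of_int j * (schr_coeff t k * lap_delta k j)" for k
  have "f (Suc k) = schr_coeff t (Suc k) * (of_int j * lap_delta (Suc k) j)" for k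
    by (simp add: f_def ac_simps)
  also have "\<dots> k = (of_nat (Suc k) * schr_coeff t (Suc k)) * (lap_delta k (j - 1) - lap_delta k (j + 1))" for k
    by (simp only: of_int_mult_lap_delta ac_simps)
  also have "\<dots> k = \<i> * of_real t * (schr_coeff t k * lap_delta k (j - 1) - schr_coeff t k * lap_delta k (j + 1))" for k
    by (simp only: schr_coeff_Suc right_diff_distrib ac_simps)
  finally have "(\<lambda>k. f (Suc k)) sums (\<i> * of_real t * (schr_kernel t (j - 1) - schr_kernel t (j + 1)))"
    by (simp only:) (intro sums_mult sums_diff schr_kernel_sums)
  moreover have "f 0 = 0"
    by (simp add: f_def delta0_def)
  ultimately have "f sums (\<i> * of_real t * (schr_kernel t (j - 1) - schr_kernel t (j + 1)))"
    by (simp add: sums_Suc_iff)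
  moreover have "f sums (of_int j * schr_kernel t j)"
    unfolding f_def by (rule sums_mult[OF schr_kernel_sums])
  ultimately show ?thesis
    using sums_unique2 by blast
qed

lemma schr_kernel_recurrence_twice:
  "(of_int j)\<^sup>2 * schr_kernel t j = - (of_real t)\<^sup>2 * schr_kernel t (j - 2) + \<i> * of_real t * schr_kernel t (j - 1)
     + 2 * (of_real t)\<^sup>2 * schr_kernel t j + \<i> * of_real t * schr_kernel t (j + 1)
     - (of_real t)\<^sup>2 * schr_kernel t (j + 2)"
proof -
  let ?u = "schr_kernel t"
  have indices: "j - 1 - 1 = j - 2" "j - 1 + 1 = j" "j + 1 - 1 = j" "j + 1 + 1 = j + 2"
    by simp_all
  have "(of_int j - 1) * ?u (j - 1) = \<i> * of_real t * (?u (j - 2) - ?u j)"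
    and "(of_int j + 1) * ?u (j + 1) = \<i> * of_real t * (?u j - ?u (j + 2))"
    using schr_kernel_recurrence[of "j - 1" t] schr_kernel_recurrence[of "j + 1" t]
    unfolding indices by simp_all
  moreover have "\<i> * \<i> = (-1 :: complex)"
    by simp
  ultimately show ?thesis
    using schr_kernel_recurrence[of j t] by algebra
qed

lemma has_sum_schr_kernel_second_moment:
  "((\<lambda>j. (of_int j)\<^sup>2 * (norm (schr_kernel t j))\<^sup>2) has_sum 2 * t\<^sup>2) UNIV"
proof -
  define c :: "int \<Rightarrow> complex" where "c p = (if p = -1 then \<i> * of_real t else - \<i> * of_real t)" for p
  have combination: "of_int j * schr_kernel t j = (\<Sum>p\<in>{-1, 1}. c p * schr_kernel t (j + p))" for j
    by (simp add: c_def schr_kernel_recurrence algebra_simps)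
  have "(norm (\<Sum>p\<in>{-1, 1}. c p * schr_kernel t (j + p)))\<^sup>2 = (of_int j)\<^sup>2 * (norm (schr_kernel t j))\<^sup>2" for j
    unfolding combination[symmetric] by (simp add: norm_mult power_mult_distrib)
  moreover have "((\<lambda>j. (norm (\<Sum>p\<in>{-1, 1}. c p * schr_kernel t (j + p)))\<^sup>2) has_sum (\<Sum>p\<in>{-1, 1}. (norm (c p))\<^sup>2)) UNIV"
    by (rule has_sum_norm_sum_shifts_sq[OF schr_kernel_shifts_orthonormal]) simp
  ultimately show ?thesis
    by (simp add: c_def norm_mult)
qed

lemma has_sum_schr_kernel_fourth_moment:
  "((\<lambda>j. (of_int j) ^ 4 * (norm (schr_kernel t j))\<^sup>2) has_sum 6 * t ^ 4 + 2 * t\<^sup>2) UNIV"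
proof -
  define c :: "int \<Rightarrow> complex" where
    "c p = (if p = 0 then 2 * (of_real t)\<^sup>2 else if \<bar>p\<bar> = 1 then \<i> * of_real t else - (of_real t)\<^sup>2)" for p
  have combination: "(of_int j)\<^sup>2 * schr_kernel t j = (\<Sum>p\<in>{-2, -1, 0, 1, 2}. c p * schr_kernel t (j + p))" for j
    by (simp only: schr_kernel_recurrence_twice) (simp add: c_def algebra_simps)
  have norm_combination: "(norm (\<Sum>p\<in>{-2, -1, 0, 1, 2}. c p * schr_kernel t (j + p)))\<^sup>2
      = (of_int j) ^ 4 * (norm (schr_kernel t j))\<^sup>2" for j
    unfolding combination[symmetric] by (simp add: norm_mult norm_power power_mult_distrib flip: power_mult)
  have sum_coefficients: "(\<Sum>p\<in>{-2, -1, 0, 1, 2}. (norm (c p))\<^sup>2) = 6 * t ^ 4 + 2 * t\<^sup>2"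
    by (simp add: c_def norm_mult norm_power power_mult_distrib flip: power_mult)
  have "((\<lambda>j. (norm (\<Sum>p\<in>{-2, -1, 0, 1, 2}. c p * schr_kernel t (j + p)))\<^sup>2)
      has_sum (\<Sum>p\<in>{-2, -1, 0, 1, 2}. (norm (c p))\<^sup>2)) UNIV"
    by (rule has_sum_norm_sum_shifts_sq[OF schr_kernel_shifts_orthonormal]) simp
  then show ?thesis
    unfolding norm_combination sum_coefficients .
qed

lemma schr_evol_sum_translates_delta0:
  "schr_evol t (\<lambda>n. \<Sum>j\<in>F. b j * delta0 (n - j)) m = (\<Sum>j\<in>F. b j * schr_kernel t (m - j))"
proof -
  have "schr_evol t (\<lambda>n. \<Sum>j\<in>F. b j * delta0 (n - j)) m
      = (\<Sum>k. \<Sum>j\<in>F. b j * (schr_coeff t k * lap_delta k (m - j)))"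
    by (simp add: schr_evol_def dlap_pow_sum_translates schr_coeff_def lap_delta_def sum_distrib_left mult_ac)
  also have "\<dots> = (\<Sum>j\<in>F. \<Sum>k. b j * (schr_coeff t k * lap_delta k (m - j)))"
    by (rule suminf_sum) (intro summable_mult sums_summable[OF schr_kernel_sums])
  also have "\<dots> = (\<Sum>j\<in>F. b j * schr_kernel t (m - j))"
    by (simp add: suminf_mult[OF sums_summable[OF schr_kernel_sums]] schr_kernel_eq_suminf)
  finally show ?thesis .
qed

lemma exists_bounded_schr_evol_eq_sum_norm:
  assumes "finite F"
  shows "\<exists>a. (\<forall>j. norm (a j) \<le> 1) \<and> norm (schr_evol t a 0) = (\<Sum>j\<in>F. norm (schr_kernel t j))"
proof -
  define G where "G = uminus ` F"
  define a where "a j = (if j \<in> G then cnj (sgn (schr_kernel t (- j))) else 0)" for j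
  have "finite G"
    using assms by (simp add: G_def)
  then have decomposition: "(\<lambda>n. \<Sum>j\<in>G. a j * delta0 (n - j)) = a"
    by (auto simp: fun_eq_iff delta0_def a_def if_distrib cong: if_cong)
  have "schr_evol t a 0 = (\<Sum>j\<in>G. a j * schr_kernel t (- j))"
    using schr_evol_sum_translates_delta0[of t a G 0] by (simp only: decomposition diff_0)
  also have "\<dots> = (\<Sum>j\<in>G. of_real (norm (schr_kernel t (- j))))"
    by (intro sum.cong refl) (simp add: a_def cnj_sgn_mult_self)
  also have "\<dots> = of_real (\<Sum>j\<in>F. norm (schr_kernel t j))"
    unfolding G_def by (subst sum.reindex) (auto intro: inj_onI)
  finally show ?thesis
    by (intro exI[of _ a]) (auto simp: a_def norm_sgn sum_nonneg simp del: of_real_sum)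
qed

section \<open>Localisation of the kernel\<close>

lemma sum_norm_schr_kernel_sq_ge:
  assumes "0 \<le> R"
  shows "1 - 2 * t\<^sup>2 / (of_int R + 1)\<^sup>2 \<le> (\<Sum>j\<in>{-R..R}. (norm (schr_kernel t j))\<^sup>2)"
proof -
  let ?F = "{-R..R}" and ?m = "\<lambda>j. (norm (schr_kernel t j))\<^sup>2"
  define w :: real where "w = 1 / (of_int R + 1)\<^sup>2"
  have w: "0 < w"
    using assms by (simp add: w_def)
  have "1 \<le> (\<Sum>j\<in>?F. ?m j) + w * (2 * t\<^sup>2)"
  proof (rule has_sum_mono[OF has_sum_norm_schr_kernel_sq])
    show "((\<lambda>j. (if j \<in> ?F then ?m j else 0) + w * ((of_int j)\<^sup>2 * ?m j))
        has_sum (\<Sum>j\<in>?F. ?m j) + w * (2 * t\<^sup>2)) UNIV"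
      by (intro has_sum_add has_sum_cmult_right has_sum_if_in_finite has_sum_schr_kernel_second_moment)
         simp
    show "?m j \<le> (if j \<in> ?F then ?m j else 0) + w * ((of_int j)\<^sup>2 * ?m j)" for j
    proof (cases "j \<in> ?F")
      case True
      then show ?thesis
        using w by simp
    next
      case False
      then have "of_int R + 1 \<le> \<bar>real_of_int j\<bar>"
        by auto
      then have "(of_int R + 1)\<^sup>2 \<le> \<bar>real_of_int j\<bar>\<^sup>2"
        by (rule power_mono) (use assms in simp)
      then have "(of_int R + 1)\<^sup>2 \<le> (real_of_int j)\<^sup>2"
        by simp
      then have "1 \<le> w * (of_int j)\<^sup>2"
        using assms by (simp add: w_def field_simps)
      from mult_right_mono[OF this, of "?m j"] show ?thesis
        unfolding if_not_P[OF False] by (simp add: mult.assoc)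
    qed
  qed
  then show ?thesis
    by (simp add: w_def)
qed

text \<open>
  The kernel is u_j(t) = i^j e^(-2it) J_j(2t), whose mass lies in |j| \<le> 2t; 63/32 is any fixed
  ratio below 2, so that energy still controls pair_mass throughout the bulk.
\<close>
definition bulk_radius :: "real \<Rightarrow> int" where
  "bulk_radius t = \<lfloor>63 * t / 32\<rfloor>"

lemma weight_le_outside_bulk:
  assumes "0 < t" "j \<notin> {-bulk_radius t..bulk_radius t}"
  shows "(of_int j)\<^sup>2 / (4 * t\<^sup>2) - ((of_int j)\<^sup>2 / (4 * t\<^sup>2))\<^sup>2 \<le> 1 / 32"
proof -
  define w where "w = (of_int j)\<^sup>2 / (4 * t\<^sup>2)"
  have "real_of_int (bulk_radius t + 1) \<le> real_of_int \<bar>j\<bar>"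
    using assms(2) unfolding of_int_le_iff by auto
  moreover have "63 * t / 32 < real_of_int (bulk_radius t) + 1"
    unfolding bulk_radius_def by linarith
  ultimately have "63 * t / 32 \<le> \<bar>of_int j\<bar>"
    by simp
  then have "(63 * t / 32)\<^sup>2 \<le> \<bar>of_int j\<bar>\<^sup>2"
    by (rule power_mono) (use assms in simp)
  then have "(63 * t / 32)\<^sup>2 / (4 * t\<^sup>2) \<le> w"
    unfolding w_def by (intro divide_right_mono) simp_all
  moreover have "(63 * t / 32)\<^sup>2 / (4 * t\<^sup>2) = 3969 / 4096"
    using assms by (simp add: field_simps power2_eq_square)
  ultimately have "0 \<le> (w - 31 / 32) * (w - 1 / 32)"
    by simp
  moreover have "(w - 31 / 32) * (w - 1 / 32) = w\<^sup>2 - w + 31 / 1024"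
    by (simp add: power2_eq_square field_simps)
  ultimately show ?thesis
    unfolding w_def[symmetric] by linarith
qed

text \<open>
  The weight w - w^2 with w = j^2 / (4 t^2) has total mass 1/8 - 1/(8 t^2) by the second and
  fourth moments, but is at most 1/4 everywhere and at most 1/32 outside the bulk.
\<close>
lemma sum_norm_schr_kernel_sq_bulk_ge:
  assumes "2 \<le> t"
  shows "1 / 4 \<le> (\<Sum>j\<in>{-bulk_radius t..bulk_radius t}. (norm (schr_kernel t j))\<^sup>2)"
proof -
  let ?F = "{-bulk_radius t..bulk_radius t}" and ?m = "\<lambda>j. (norm (schr_kernel t j))\<^sup>2"
  define w where "w j = (of_int j)\<^sup>2 / (4 * t\<^sup>2)" for j
  have t: "0 < t"
    using assms by simp
  have "((\<lambda>j. 1 / (4 * t\<^sup>2) * ((of_int j)\<^sup>2 * ?m j) + (- 1 / (16 * t ^ 4)) * ((of_int j) ^ 4 * ?m j))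
      has_sum 1 / (4 * t\<^sup>2) * (2 * t\<^sup>2) + (- 1 / (16 * t ^ 4)) * (6 * t ^ 4 + 2 * t\<^sup>2)) UNIV"
    by (intro has_sum_add has_sum_cmult_right has_sum_schr_kernel_second_moment
        has_sum_schr_kernel_fourth_moment)
  moreover have "(\<lambda>j. 1 / (4 * t\<^sup>2) * ((of_int j)\<^sup>2 * ?m j) + (- 1 / (16 * t ^ 4)) * ((of_int j) ^ 4 * ?m j))
      = (\<lambda>j. (w j - (w j)\<^sup>2) * ?m j)"
    using t by (simp add: w_def fun_eq_iff field_simps power2_eq_square eval_nat_numeral)
  moreover have "1 / (4 * t\<^sup>2) * (2 * t\<^sup>2) + (- 1 / (16 * t ^ 4)) * (6 * t ^ 4 + 2 * t\<^sup>2) = 1 / 8 - 1 / (8 * t\<^sup>2)"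
    using t by (simp add: field_simps power2_eq_square eval_nat_numeral)
  ultimately have "((\<lambda>j. (w j - (w j)\<^sup>2) * ?m j) has_sum 1 / 8 - 1 / (8 * t\<^sup>2)) UNIV"
    by simp
  moreover have "((\<lambda>j. 1 / 32 * ?m j + (if j \<in> ?F then 7 / 32 * ?m j else 0))
      has_sum 1 / 32 + 7 / 32 * (\<Sum>j\<in>?F. ?m j)) UNIV"
    using has_sum_add[OF has_sum_cmult_right[OF has_sum_norm_schr_kernel_sq, of "1 / 32" t]
        has_sum_if_in_finite[of ?F "\<lambda>j. 7 / 32 * ?m j"]]
    by (simp add: sum_distrib_left)
  moreover have "(w j - (w j)\<^sup>2) * ?m j \<le> 1 / 32 * ?m j + (if j \<in> ?F then 7 / 32 * ?m j else 0)" for j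
  proof (cases "j \<in> ?F")
    case True
    have "w j - (w j)\<^sup>2 \<le> 1 / 4"
      using zero_le_power2[of "w j - 1 / 2"] by (simp add: power2_eq_square algebra_simps)
    with True show ?thesis
      using mult_right_mono[of "w j - (w j)\<^sup>2" "1 / 4" "?m j"] by simp
  next
    case False
    then show ?thesis
      using mult_right_mono[OF weight_le_outside_bulk[OF t False], of "?m j"]
      unfolding if_not_P[OF False] w_def by simp
  qed
  ultimately have "1 / 8 - 1 / (8 * t\<^sup>2) \<le> 1 / 32 + 7 / 32 * (\<Sum>j\<in>?F. ?m j)"
    by (rule has_sum_mono)
  moreover have "1 / (8 * t\<^sup>2) \<le> 1 / 32"
    using power_mono[OF assms, of 2] by (simp add: divide_le_eq)
  ultimately show ?thesis
    by simp
qed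

section \<open>A dispersive bound in the bulk\<close>

lemma quadratic_form_recurrence_step:
  assumes "w = x + \<i> * of_real l * y"
  shows "(norm y)\<^sup>2 + (norm w)\<^sup>2 + l * Im (y * cnj w) = (norm x)\<^sup>2 + (norm y)\<^sup>2 + l * Im (x * cnj y)"
  unfolding assms cmod_power2 by (simp add: algebra_simps power2_eq_square)

definition pair_mass :: "real \<Rightarrow> int \<Rightarrow> real" where
  "pair_mass t j = (norm (schr_kernel t j))\<^sup>2 + (norm (schr_kernel t (j + 1)))\<^sup>2"

text \<open>
  The invariant of quadratic_form_recurrence_step for the recurrence
  u (j + 2) = u j + i ((j + 1) / t) u (j + 1), with the coefficient (j + 1) / t frozen at j / t.
\<close>
definition energy :: "real \<Rightarrow> int \<Rightarrow> real" where
  "energy t j = pair_mass t j + of_int j / t * Im (schr_kernel t j * cnj (schr_kernel t (j + 1)))"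

lemma energy_succ:
  assumes "t \<noteq> 0"
  shows "energy t (j + 1) = energy t j + Im (schr_kernel t j * cnj (schr_kernel t (j + 1))) / t"
proof -
  let ?u = "schr_kernel t"
  define l where "l = (of_int j + 1) / t"
  have recurrence: "(of_int j + 1) * ?u (j + 1) = \<i> * of_real t * (?u j - ?u (j + 2))"
    using schr_kernel_recurrence[of "j + 1" t] by (simp add: add.assoc)
  have "complex_of_real l * of_real t = of_int j + 1"
    using assms by (simp add: l_def flip: of_real_mult)
  moreover have "\<i> * \<i> = (-1 :: complex)"
    by simp
  ultimately have "\<i> * of_real t * (?u (j + 2) - (?u j + \<i> * of_real l * ?u (j + 1))) = 0"
    using recurrence by algebra
  then have "?u (j + 2) = ?u j + \<i> * of_real l * ?u (j + 1)"
    using assms by simp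
  moreover have "of_int (j + 1) / t = l" "j + 1 + 1 = j + 2"
    by (simp_all add: l_def)
  then have "energy t (j + 1)
      = (norm (?u (j + 1)))\<^sup>2 + (norm (?u (j + 2)))\<^sup>2 + l * Im (?u (j + 1) * cnj (?u (j + 2)))"
    by (simp only: energy_def pair_mass_def)
  ultimately have "energy t (j + 1) = pair_mass t j + l * Im (?u j * cnj (?u (j + 1)))"
    by (simp only: quadratic_form_recurrence_step pair_mass_def)
  also have "\<dots> = energy t j + Im (?u j * cnj (?u (j + 1))) / t"
    unfolding energy_def l_def by (simp add: add_divide_distrib distrib_right)
  finally show ?thesis .
qed

lemma abs_energy_sub_pair_mass_le:
  assumes "0 < t"
  shows "\<bar>energy t j - pair_mass t j\<bar> \<le> \<bar>of_int j\<bar> / (2 * t) * pair_mass t j"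
proof -
  have "\<bar>energy t j - pair_mass t j\<bar> = \<bar>of_int j\<bar> / t * \<bar>Im (schr_kernel t j * cnj (schr_kernel t (j + 1)))\<bar>"
    using assms by (simp add: energy_def abs_mult)
  also have "\<dots> \<le> \<bar>of_int j\<bar> / t * (pair_mass t j / 2)"
    unfolding pair_mass_def using assms by (intro mult_left_mono abs_Im_mult_cnj_le) simp
  finally show ?thesis
    by simp
qed

lemma sum_pair_mass_le:
  assumes "finite F"
  shows "(\<Sum>j\<in>F. pair_mass t j) \<le> 2"
proof -
  have "(\<Sum>j\<in>F. (norm (schr_kernel t (j + 1)))\<^sup>2) = (\<Sum>j\<in>(\<lambda>j. j + 1) ` F. (norm (schr_kernel t j))\<^sup>2)"
    by (simp add: sum.reindex)
  then show ?thesis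
    using sum_norm_schr_kernel_sq_le[of F t] sum_norm_schr_kernel_sq_le[of "(\<lambda>j. j + 1) ` F" t] assms
    by (simp add: pair_mass_def sum.distrib)
qed

lemma abs_energy_diff_le:
  assumes "0 < t"
  shows "\<bar>energy t k - energy t j\<bar> \<le> 1 / t"
proof -
  have ordered: "\<bar>energy t k - energy t j\<bar> \<le> 1 / t" if "j \<le> k" for j k
  proof -
    have "energy t k - energy t j = (\<Sum>i\<in>{j..<k}. Im (schr_kernel t i * cnj (schr_kernel t (i + 1))) / t)"
      using assms by (simp add: energy_succ flip: sum_int_telescope[OF that])
    also have "\<bar>\<dots>\<bar> \<le> (\<Sum>i\<in>{j..<k}. pair_mass t i / (2 * t))"
    proof (intro order_trans[OF sum_abs] sum_mono)
      fix i
      show "\<bar>Im (schr_kernel t i * cnj (schr_kernel t (i + 1))) / t\<bar> \<le> pair_mass t i / (2 * t)"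
        using divide_right_mono[OF abs_Im_mult_cnj_le, of t] assms
        by (simp add: pair_mass_def abs_divide)
    qed
    also have "\<dots> \<le> 2 / (2 * t)"
      unfolding sum_divide_distrib[symmetric] using assms sum_pair_mass_le[of "{j..<k}" t]
      by (intro divide_right_mono) simp_all
    finally show ?thesis
      by simp
  qed
  show ?thesis
    using ordered[of j k] ordered[of k j] by (cases "j \<le> k") (simp_all add: abs_minus_commute)
qed

lemma abs_div_le_of_bulk:
  assumes "0 < t" "\<bar>j\<bar> \<le> bulk_radius t"
  shows "\<bar>of_int j\<bar> / (2 * t) \<le> 63 / 64"
proof -
  have "\<bar>real_of_int j\<bar> \<le> 63 * t / 32"
    using assms(2) unfolding bulk_radius_def by linarith
  then show ?thesis
    using assms(1) by (simp add: divide_le_eq)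
qed

lemma pair_mass_le_energy:
  assumes "0 < t" "\<bar>j\<bar> \<le> bulk_radius t"
  shows "pair_mass t j \<le> 64 * energy t j"
proof -
  have "\<bar>of_int j\<bar> / (2 * t) * pair_mass t j \<le> 63 / 64 * pair_mass t j"
    by (rule mult_right_mono[OF abs_div_le_of_bulk[OF assms]]) (simp add: pair_mass_def)
  then show ?thesis
    using abs_energy_sub_pair_mass_le[OF assms(1), of j] by linarith
qed

text \<open>Average energy t k \<le> energy t j + 1 / t over the bulk, where energy is at most twice pair_mass.\<close>
lemma energy_le:
  assumes "2 \<le> t"
  shows "energy t k \<le> 5 / t"
proof -
  let ?W = "{-bulk_radius t..bulk_radius t}"
  define n where "n = real (card ?W)"
  have t: "0 < t"
    using assms by simp
  have "energy t k \<le> 2 * pair_mass t j + 1 / t" if "j \<in> ?W" for j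
  proof -
    have "\<bar>of_int j\<bar> / (2 * t) \<le> 1"
      using abs_div_le_of_bulk[OF t, of j] that by fastforce
    then have "\<bar>of_int j\<bar> / (2 * t) * pair_mass t j \<le> 1 * pair_mass t j"
      by (intro mult_right_mono) (auto simp: pair_mass_def)
    then show ?thesis
      using abs_energy_sub_pair_mass_le[OF t, of j] abs_energy_diff_le[OF t, of k j] by linarith
  qed
  then have "(\<Sum>j\<in>?W. energy t k) \<le> (\<Sum>j\<in>?W. 2 * pair_mass t j + 1 / t)"
    by (rule sum_mono)
  then have "n * energy t k \<le> 2 * (\<Sum>j\<in>?W. pair_mass t j) + n / t"
    unfolding n_def by (simp add: sum.distrib sum_distrib_left)
  also have "\<dots> \<le> 4 + n / t"
    using sum_pair_mass_le[of ?W t] by simp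
  finally have card_energy: "n * energy t k \<le> 4 + n / t" .
  have "63 * t / 32 - 1 < of_int (bulk_radius t)"
    unfolding bulk_radius_def by linarith
  then have card: "t \<le> n"
    unfolding n_def using assms by simp
  have "energy t k \<le> 4 / n + 1 / t"
    using card_energy card t by (simp add: field_simps)
  also have "\<dots> \<le> 4 / t + 1 / t"
    using card t by (intro add_right_mono divide_left_mono) auto
  finally show ?thesis
    by simp
qed

lemma norm_schr_kernel_sq_bulk_le:
  assumes "2 \<le> t" "\<bar>j\<bar> \<le> bulk_radius t"
  shows "(norm (schr_kernel t j))\<^sup>2 \<le> 320 / t"
proof -
  have "(norm (schr_kernel t j))\<^sup>2 \<le> pair_mass t j"
    by (simp add: pair_mass_def)
  also have "\<dots> \<le> 64 * energy t j"
    using assms by (intro pair_mass_le_energy) auto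
  also have "\<dots> \<le> 64 * (5 / t)"
    using energy_le[OF assms(1), of j] by (rule mult_left_mono) simp
  finally show ?thesis
    by simp
qed

lemma sum_norm_schr_kernel_ge:
  assumes "0 \<le> t"
  shows "\<exists>N. sqrt t / 72 \<le> (\<Sum>j\<in>{-N..N}. norm (schr_kernel t j))"
proof (cases "t < 2")
  case True
  have "sqrt t \<le> 2"
    using True real_sqrt_le_iff[of t 4] by simp
  then have "sqrt t / 72 \<le> 1 - 2 * t\<^sup>2 / (of_int 4 + 1)\<^sup>2"
    using True assms power_mono[of t 2 2] by simp
  also have "\<dots> \<le> (\<Sum>j\<in>{-4..4}. (norm (schr_kernel t j))\<^sup>2)"
    by (rule sum_norm_schr_kernel_sq_ge) simp
  also have "\<dots> \<le> 1 * (\<Sum>j\<in>{-4..4}. norm (schr_kernel t j))"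
    by (rule sum_sq_le_bound_mult_sum) (simp_all add: norm_schr_kernel_le_1)
  finally show ?thesis
    by auto
next
  case False
  let ?W = "{-bulk_radius t..bulk_radius t}"
  have t: "2 \<le> t" "0 < sqrt t"
    using False by simp_all
  have "norm (schr_kernel t j) \<le> 18 / sqrt t" if "j \<in> ?W" for j
  proof (rule power2_le_imp_le)
    have "(norm (schr_kernel t j))\<^sup>2 \<le> 320 / t"
      using that by (intro norm_schr_kernel_sq_bulk_le t) auto
    also have "\<dots> \<le> (18 / sqrt t)\<^sup>2"
      using t by (simp add: power_divide divide_right_mono)
    finally show "(norm (schr_kernel t j))\<^sup>2 \<le> (18 / sqrt t)\<^sup>2" .
  qed (use t in simp)
  then have "1 / 4 \<le> 18 / sqrt t * (\<Sum>j\<in>?W. norm (schr_kernel t j))"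
    using sum_norm_schr_kernel_sq_bulk_ge[OF t(1)] sum_sq_le_bound_mult_sum[of ?W "\<lambda>j. norm (schr_kernel t j)"]
    by (meson norm_ge_zero order_trans)
  then have "sqrt t / 72 \<le> (\<Sum>j\<in>?W. norm (schr_kernel t j))"
    using t by (simp add: field_simps)
  then show ?thesis
    by blast
qed

theorem lemmaA:
  shows "\<exists>\<delta>::real. \<delta> > 0 \<and>
    (\<forall>t::real. t \<ge> 0 \<longrightarrow>
      (\<exists>a :: int \<Rightarrow> complex. (\<forall>j. norm (a j) \<le> 1) \<and>
         norm (schr_evol t a 0) \<ge> \<delta> * sqrt t))"
proof (intro exI[of _ "1 / 72"] conjI allI impI)
  fix t :: real
  assume "t \<ge> 0"
  then obtain N where N: "sqrt t / 72 \<le> (\<Sum>j\<in>{-N..N}. norm (schr_kernel t j))"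
    using sum_norm_schr_kernel_ge by blast
  obtain a where "\<forall>j. norm (a j) \<le> 1" "norm (schr_evol t a 0) = (\<Sum>j\<in>{-N..N}. norm (schr_kernel t j))"
    using exists_bounded_schr_evol_eq_sum_norm[of "{-N..N}" t] by auto
  with N show "\<exists>a. (\<forall>j. norm (a j) \<le> 1) \<and> norm (schr_evol t a 0) \<ge> 1 / 72 * sqrt t"
    by (intro exI[of _ a]) simp
qed simp

end
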